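(* Either let all graphs below be undirected, or let all be directed. Let $D$ be a graph with $n$ vertices and $f(D)=f$, let $R\subseteq V(D)$ be a bad set of $D$, and let $r'\in V(D)\setminus R$. Then there is a family $(D_i)_{i\in\mathbb{N}}$ of graphs such that for every $i$: \begin{itemize} \item $n(D_i)=n+i(n-1)$; \item $f(D_i)\geq f+if$, with equality if $R$ is an inclusion-wise minimal bad set of $D$; \item the degeneracy of $D_i$ is at most $\mathrm{deg}_{\mathrm{RL}}(D,R,r')$. \end{itemize}
   Context: Undirected graphs are finite and simple; directed graphs are oriented graphs (no loops, no multiple arcs, no antiparallel arcs). $n(H)$ is the number of vertices; $f(H)$ is the minimum size of a set $F\subseteq V(H)$ such that $H-F$ has no (directed, in the directed case) cycle. A set $R\subseteq V(H)$ is bad if it is not contained in any minimum feedback vertex set of $H$. A vertex ordering $\phi:V\to\{1,\dots,|V|\}$ is a $k$-elimination ordering if every vertex has at most $k$ neighbours (in the underlying undirected graph) preceding it in $\phi$; the degeneracy of a graph is the least such $k$. For $S\subseteq V$, an ordering is $S$-last if $\phi(u)<\phi(v)$ for all $u\in S$ and $v\in V\setminus S$. Let $D_{r'\times|R|}$ be the graph obtained from $D$ by replacing $r'$ by an independent set $S$ of $|R|$ new vertices, each joined to the rest of $D$ exactly as $r'$ was (same in- and out-neighbours in the directed case, same neighbours in the undirected case). The right-left-degeneracy $\mathrm{deg}_{\mathrm{RL}}(D,R,r')$ is the minimum $k$ such that $D_{r'\times|R|}$ has an $S$-last $k$-elimination ordering. $\mathbb{N}=\{0,1,2,\dots\}$.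 *)

theory Defs
  imports Main
begin

text \<open>Undirected graphs: E is symmetric and irreflexive (each edge stored in both directions).\<close>

definition graph_ok :: "bool \<Rightarrow> 'a set \<Rightarrow> ('a \<times> 'a) set \<Rightarrow> bool" where
  "graph_ok dir V E \<longleftrightarrow> finite V \<and> E \<subseteq> V \<times> V \<and> (\<forall>v. (v, v) \<notin> E) \<and>
     (if dir then (\<forall>u v. (u, v) \<in> E \<longrightarrow> (v, u) \<notin> E)
      else (\<forall>u v. (u, v) \<in> E \<longrightarrow> (v, u) \<in> E))"

definition has_cycle :: "bool \<Rightarrow> 'a set \<Rightarrow> ('a \<times> 'a) set \<Rightarrow> bool" where
  "has_cycle dir V E \<longleftrightarrow> (\<exists>vs. distinct vs \<and> set vs \<subseteq> V \<and>
     length vs \<ge> (if dir then 2 else 3) \<and>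
     (\<forall>i < length vs. (vs ! i, vs ! ((i + 1) mod length vs)) \<in> E))"

definition is_fvs :: "bool \<Rightarrow> 'a set \<Rightarrow> ('a \<times> 'a) set \<Rightarrow> 'a set \<Rightarrow> bool" where
  "is_fvs dir V E F \<longleftrightarrow> F \<subseteq> V \<and> \<not> has_cycle dir (V - F) E"

definition fvn :: "bool \<Rightarrow> 'a set \<Rightarrow> ('a \<times> 'a) set \<Rightarrow> nat" where
  "fvn dir V E = (LEAST k. \<exists>F. is_fvs dir V E F \<and> card F = k)"

definition min_fvs :: "bool \<Rightarrow> 'a set \<Rightarrow> ('a \<times> 'a) set \<Rightarrow> 'a set \<Rightarrow> bool" where
  "min_fvs dir V E F \<longleftrightarrow> is_fvs dir V E F \<and> card F = fvn dir V E"

definition bad_set :: "bool \<Rightarrow> 'a set \<Rightarrow> ('a \<times> 'a) set \<Rightarrow> 'a set \<Rightarrow> bool" where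
  "bad_set dir V E R \<longleftrightarrow> R \<subseteq> V \<and> \<not> (\<exists>F. min_fvs dir V E F \<and> R \<subseteq> F)"

definition minimal_bad_set :: "bool \<Rightarrow> 'a set \<Rightarrow> ('a \<times> 'a) set \<Rightarrow> 'a set \<Rightarrow> bool" where
  "minimal_bad_set dir V E R \<longleftrightarrow> bad_set dir V E R \<and> (\<forall>R'. R' \<subset> R \<longrightarrow> \<not> bad_set dir V E R')"

definition elim_ordering :: "'a set \<Rightarrow> ('a \<times> 'a) set \<Rightarrow> nat \<Rightarrow> ('a \<Rightarrow> nat) \<Rightarrow> bool" where
  "elim_ordering V E k \<phi> \<longleftrightarrow> bij_betw \<phi> V {1..card V} \<and>
     (\<forall>v\<in>V. card {u \<in> V. ((u, v) \<in> E \<or> (v, u) \<in> E) \<and> \<phi> u < \<phi> v} \<le> k)"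

definition degeneracy :: "'a set \<Rightarrow> ('a \<times> 'a) set \<Rightarrow> nat" where
  "degeneracy V E = (LEAST k. \<exists>\<phi>. elim_ordering V E k \<phi>)"

definition S_last :: "'a set \<Rightarrow> 'a set \<Rightarrow> ('a \<Rightarrow> nat) \<Rightarrow> bool" where
  "S_last V S \<phi> \<longleftrightarrow> (\<forall>u\<in>S. \<forall>v\<in>V - S. \<phi> u < \<phi> v)"

text \<open>D_{r' x m}: replace r' by an independent set of m new vertices Inr 0, ..., Inr (m-1),
  each with the same in-/out-neighbours (neighbours) as r'.\<close>

definition blowup_V :: "'a set \<Rightarrow> 'a \<Rightarrow> nat \<Rightarrow> ('a + nat) set" where
  "blowup_V V r m = Inl ` (V - {r}) \<union> Inr ` {..<m}"

definition blowup_E :: "('a \<times> 'a) set \<Rightarrow> 'a \<Rightarrow> nat \<Rightarrow> (('a + nat) \<times> ('a + nat)) set" where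
  "blowup_E E r m =
     {(Inl u, Inl v) | u v. (u, v) \<in> E \<and> u \<noteq> r \<and> v \<noteq> r} \<union>
     {(Inr j, Inl v) | j v. j < m \<and> (r, v) \<in> E \<and> v \<noteq> r} \<union>
     {(Inl u, Inr j) | u j. j < m \<and> (u, r) \<in> E \<and> u \<noteq> r}"

definition deg_RL :: "'a set \<Rightarrow> ('a \<times> 'a) set \<Rightarrow> 'a set \<Rightarrow> 'a \<Rightarrow> nat" where
  "deg_RL V E R r = (LEAST k. \<exists>\<phi>.
     elim_ordering (blowup_V V r (card R)) (blowup_E E r (card R)) k \<phi> \<and>
     S_last (blowup_V V r (card R)) (Inr ` {..<card R}) \<phi>)"

end

theory Submission
  imports Defs "HOL-Library.Product_Lexorder"
begin

(* D_i is a tower of i + 1 layers: layer 0 is a copy of D, every further layer a copy of D - r',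
   and each vertex of the copy of R in a layer is joined to the layer above exactly as r' is.

   Lower bound, by induction on the layers: a feedback vertex set of D_(i+1) either misses some
   vertex x of the copy of R in layer i, and then its top layer (with x playing r') is a feedback
   vertex set of D; or it contains that whole copy of R, which costs f + 1 in D_i because R is bad,
   while its top layer plus r' is a feedback vertex set of D.

   Upper bound for minimal bad R: take a minimum feedback vertex set F of D with R - {x} <= F and
   x not in F, copy it into every layer and, where F uses r', delete x in the layer below instead.
   A surviving cycle can leave its highest layer only through x of the layer below, so it folds onto
   a cycle of D - F.

   Degeneracy: rank the layers bottom-up and each layer by an S-last elimination ordering of
   D_(r' x |R|), the copy of R in the layer below taking the place of S. *)

section \<open>Cycles\<close>

definition is_cycle :: "bool \<Rightarrow> 'a set \<Rightarrow> ('a \<times> 'a) set \<Rightarrow> 'a list \<Rightarrow> bool" where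
  "is_cycle dir V E vs \<longleftrightarrow> distinct vs \<and> set vs \<subseteq> V \<and>
     length vs \<ge> (if dir then 2 else 3) \<and>
     (\<forall>i < length vs. (vs ! i, vs ! ((i + 1) mod length vs)) \<in> E)"

lemma has_cycle_iff: "has_cycle dir V E \<longleftrightarrow> (\<exists>vs. is_cycle dir V E vs)"
  unfolding has_cycle_def is_cycle_def by blast

lemma is_cycle_map:
  assumes "is_cycle dir V E vs" "inj_on g (set vs)" "g ` set vs \<subseteq> V'"
    and "\<And>u v. u \<in> set vs \<Longrightarrow> v \<in> set vs \<Longrightarrow> (u, v) \<in> E \<Longrightarrow> (g u, g v) \<in> E'"
  shows "is_cycle dir V' E' (map g vs)"
proof -
  have "(map g vs ! i, map g vs ! ((i + 1) mod length vs)) \<in> E'" if "i < length vs" for i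
  proof -
    have "0 < length vs" using that by linarith
    then have "(i + 1) mod length vs < length vs" by simp
    then show ?thesis using assms(1,4) that unfolding is_cycle_def by simp
  qed
  then show ?thesis using assms(1-3) unfolding is_cycle_def by (auto simp: distinct_map)
qed

lemma is_cycle_rotate:
  assumes "is_cycle dir V E vs"
  shows "is_cycle dir V E (rotate p vs)"
proof -
  let ?L = "length vs"
  have "(rotate p vs ! i, rotate p vs ! ((i + 1) mod ?L)) \<in> E" if "i < ?L" for i
  proof -
    have "0 < ?L" using that by linarith
    then have "rotate p vs ! ((i + 1) mod ?L) = vs ! ((p + (i + 1) mod ?L) mod ?L)"
      by (simp add: nth_rotate)
    also have "\<dots> = vs ! (((p + i) mod ?L + 1) mod ?L)"
      by (simp add: mod_simps add.assoc)
    finally have "rotate p vs ! ((i + 1) mod ?L) = vs ! (((p + i) mod ?L + 1) mod ?L)" .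
    moreover have "(p + i) mod ?L < ?L" using \<open>0 < ?L\<close> by simp
    ultimately show ?thesis using assms that unfolding is_cycle_def by (simp add: nth_rotate)
  qed
  then show ?thesis using assms unfolding is_cycle_def by simp
qed

lemma is_cycle_subset_single_port:
  assumes cyc: "is_cycle dir V E vs" and x: "x \<in> set vs" "x \<in> A"
    and exit: "\<And>u v. u \<in> set vs \<Longrightarrow> v \<in> set vs \<Longrightarrow> (u, v) \<in> E \<Longrightarrow> u \<in> A \<Longrightarrow> v \<notin> A \<Longrightarrow> v = c"
    and entry: "\<And>u v. u \<in> set vs \<Longrightarrow> v \<in> set vs \<Longrightarrow> (u, v) \<in> E \<Longrightarrow> u \<notin> A \<Longrightarrow> v \<in> A \<Longrightarrow> u = c"
  shows "set vs \<subseteq> insert c A"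
proof (rule ccontr)
  obtain p where p: "p < length vs" "vs ! p = x" using x(1) by (meson in_set_conv_nth)
  define ws where "ws = rotate p vs"
  let ?L = "length ws"
  have ws: "distinct ws" "set ws = set vs"
    and step: "\<And>i. i < ?L \<Longrightarrow> (ws ! i, ws ! ((i + 1) mod ?L)) \<in> E"
    using is_cycle_rotate[OF cyc, of p] unfolding ws_def is_cycle_def by auto
  have "0 < length vs" using p(1) by linarith
  then have "0 < ?L" "ws ! 0 = x" using p nth_rotate[of 0 vs p] unfolding ws_def by simp_all
  assume "\<not> set vs \<subseteq> insert c A"
  then obtain q where q: "q < ?L" "ws ! q \<notin> A" "ws ! q \<noteq> c"
    using ws(2) by (metis in_set_conv_nth insertCI subsetI)
  \<comment> \<open>From position 0, which lies in A, the first exit from A lands on c before q, and the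
    last entry into A starts from c at or after q: two positions of c, so ws is not distinct.\<close>
  obtain k where k: "k < q" "ws ! k \<in> A" "ws ! Suc k \<notin> A"
    using ex_least_nat_less[of "\<lambda>j. ws ! j \<notin> A" q] q \<open>ws ! 0 = x\<close> x(2) by auto
  have "Suc k < ?L" using k(1) q(1) by linarith
  then have "ws ! Suc k = c"
    using exit[of "ws ! k" "ws ! Suc k"] step[of k] k by (simp add: ws(2)[symmetric])
  have "\<exists>m < ?L - q. ws ! ((q + m) mod ?L) \<notin> A \<and> ws ! ((q + m + 1) mod ?L) \<in> A"
    using ex_least_nat_less[of "\<lambda>j. ws ! ((q + j) mod ?L) \<in> A" "?L - q"] q \<open>ws ! 0 = x\<close> x(2)
    by auto
  then obtain m where "m < ?L - q" "ws ! ((q + m) mod ?L) \<notin> A" "ws ! ((q + m + 1) mod ?L) \<in> A"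
    by blast
  moreover from this(1) have "q + m < ?L" by linarith
  ultimately have m: "q + m < ?L" "ws ! (q + m) \<notin> A" "ws ! ((q + m + 1) mod ?L) \<in> A"
    by simp_all
  have "ws ! (q + m) = c"
    using \<open>0 < ?L\<close> entry[of "ws ! (q + m)" "ws ! ((q + m + 1) mod ?L)"] step[of "q + m"] m
    by (simp add: ws(2)[symmetric])
  then have "Suc k = q + m"
    using \<open>ws ! Suc k = c\<close> nth_eq_iff_index_eq[OF ws(1) \<open>Suc k < ?L\<close> m(1)] by simp
  then have "q = Suc k" using k(1) by linarith
  then show False using \<open>ws ! Suc k = c\<close> q(3) by simp
qed

section \<open>Feedback vertex sets\<close>

lemma is_fvs_self: "finite V \<Longrightarrow> is_fvs dir V E V"
  unfolding is_fvs_def has_cycle_def by (auto split: if_splits)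

lemma fvn_le_card: "is_fvs dir V E F \<Longrightarrow> fvn dir V E \<le> card F"
  unfolding fvn_def by (rule Least_le) blast

lemma ex_min_fvs: "finite V \<Longrightarrow> \<exists>F. min_fvs dir V E F"
  unfolding min_fvs_def fvn_def by (rule LeastI_ex) (use is_fvs_self in blast)

lemma is_fvs_preimage:
  assumes "is_fvs dir V' E' F" "inj_on g V" "g ` V \<subseteq> V'"
    and "\<And>u v. u \<in> V \<Longrightarrow> v \<in> V \<Longrightarrow> (u, v) \<in> E \<Longrightarrow> (g u, g v) \<in> E'"
  shows "is_fvs dir V E {v \<in> V. g v \<in> F}"
  unfolding is_fvs_def
proof (intro conjI notI)
  assume "has_cycle dir (V - {v \<in> V. g v \<in> F}) E"
  then obtain vs where vs: "is_cycle dir (V - {v \<in> V. g v \<in> F}) E vs"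
    using has_cycle_iff by blast
  then have sub: "set vs \<subseteq> V - {v \<in> V. g v \<in> F}" unfolding is_cycle_def by blast
  have "is_cycle dir (V' - F) E' (map g vs)"
  proof (rule is_cycle_map[OF vs])
    show "inj_on g (set vs)" using sub assms(2) by (auto intro: inj_on_subset)
    show "g ` set vs \<subseteq> V' - F" using sub assms(3) by auto
    show "(g u, g v) \<in> E'" if "u \<in> set vs" "v \<in> set vs" "(u, v) \<in> E" for u v
      using that sub assms(4) by blast
  qed
  then show False using assms(1) has_cycle_iff unfolding is_fvs_def by blast
qed blast

lemma fvn_le_embedding:
  assumes "finite V'" "inj_on g V" "g ` V \<subseteq> V'"
    and "\<And>u v. u \<in> V \<Longrightarrow> v \<in> V \<Longrightarrow> (u, v) \<in> E \<Longrightarrow> (g u, g v) \<in> E'"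
  shows "fvn dir V E \<le> fvn dir V' E'"
proof -
  obtain F where F: "is_fvs dir V' E' F" "card F = fvn dir V' E'"
    using ex_min_fvs[OF assms(1)] unfolding min_fvs_def by blast
  have "fvn dir V E \<le> card {v \<in> V. g v \<in> F}"
    by (rule fvn_le_card[OF is_fvs_preimage[OF F(1) assms(2-4)]])
  also have "\<dots> \<le> card F"
    using F(1) assms(1,2) unfolding is_fvs_def
    by (intro card_inj_on_le[where f = g]) (auto intro: inj_on_subset finite_subset)
  finally show ?thesis using F(2) by simp
qed

lemma map_prod_image_mem_iff:
  assumes "inj_on h V" "E \<subseteq> V \<times> V" "a \<in> V" "b \<in> V"
  shows "(h a, h b) \<in> map_prod h h ` E \<longleftrightarrow> (a, b) \<in> E"
  using inj_on_image_mem_iff[OF map_prod_inj_on[OF assms(1,1)], of "(a, b)" E] assms(2-4) by simp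

lemma fvn_image:
  assumes "finite V" "inj_on h V" "E \<subseteq> V \<times> V"
  shows "fvn dir (h ` V) (map_prod h h ` E) = fvn dir V E"
proof (rule antisym)
  show "fvn dir (h ` V) (map_prod h h ` E) \<le> fvn dir V E"
    using assms map_prod_image_mem_iff[OF assms(2,3)]
    by (intro fvn_le_embedding[where g = "inv_into V h"]) (auto simp: inj_on_inv_into)
  show "fvn dir V E \<le> fvn dir (h ` V) (map_prod h h ` E)"
    using assms by (intro fvn_le_embedding[where g = h]) auto
qed

lemma graph_ok_image:
  assumes "graph_ok dir V E" "inj_on h V"
  shows "graph_ok dir (h ` V) (map_prod h h ` E)"
proof -
  have E: "E \<subseteq> V \<times> V" using assms(1) unfolding graph_ok_def by blast
  have arcs: "\<exists>a b. (a, b) \<in> E \<and> u = h a \<and> v = h b" if "(u, v) \<in> map_prod h h ` E" for u v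
    using that by auto
  have irrefl: "\<forall>v. (v, v) \<notin> map_prod h h ` E"
  proof (intro allI notI)
    fix v assume "(v, v) \<in> map_prod h h ` E"
    then obtain a b where ab: "(a, b) \<in> E" "h a = h b" using arcs by metis
    with E have "a = b" by (intro inj_onD[OF assms(2)]) auto
    with ab(1) show False using assms(1) unfolding graph_ok_def by simp
  qed
  have reverse: "(v, u) \<in> map_prod h h ` E \<longleftrightarrow> \<not> dir" if uv: "(u, v) \<in> map_prod h h ` E" for u v
  proof -
    obtain a b where ab: "(a, b) \<in> E" "u = h a" "v = h b" using arcs[OF uv] by blast
    then have "(v, u) \<in> map_prod h h ` E \<longleftrightarrow> (b, a) \<in> E"
      using E by (simp add: map_prod_image_mem_iff[OF assms(2) E] subset_iff)
    with ab(1) show ?thesis using assms(1) unfolding graph_ok_def by (cases dir) auto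
  qed
  have "finite (h ` V)" "map_prod h h ` E \<subseteq> h ` V \<times> h ` V"
    using assms(1) E unfolding graph_ok_def by auto
  moreover have "if dir then \<forall>u v. (u, v) \<in> map_prod h h ` E \<longrightarrow> (v, u) \<notin> map_prod h h ` E
      else \<forall>u v. (u, v) \<in> map_prod h h ` E \<longrightarrow> (v, u) \<in> map_prod h h ` E"
    using reverse by (cases dir) simp_all
  ultimately show ?thesis using irrefl unfolding graph_ok_def by blast
qed

lemma fvn_less_card_if_bad_set:
  assumes "bad_set dir V E R" "is_fvs dir V E F" "R \<subseteq> F"
  shows "fvn dir V E < card F"
  using assms fvn_le_card[OF assms(2)] unfolding bad_set_def min_fvs_def by fastforce

lemma bad_set_nonempty:
  assumes "finite V" "bad_set dir V E R"
  shows "R \<noteq> {}"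
  using ex_min_fvs[OF assms(1)] assms(2) unfolding bad_set_def by blast

lemma minimal_bad_set_witness:
  assumes "minimal_bad_set dir V E R" "x \<in> R"
  obtains F where "min_fvs dir V E F" "R - {x} \<subseteq> F"
proof -
  have "\<not> bad_set dir V E (R - {x})" "R \<subseteq> V"
    using assms unfolding minimal_bad_set_def bad_set_def by blast+
  then show thesis using that unfolding bad_set_def by blast
qed

section \<open>Elimination orderings\<close>

definition earlier_nbrs :: "'a set \<Rightarrow> ('a \<times> 'a) set \<Rightarrow> ('a \<Rightarrow> 'b::ord) \<Rightarrow> 'a \<Rightarrow> 'a set" where
  "earlier_nbrs V E \<rho> v = {u \<in> V. ((u, v) \<in> E \<or> (v, u) \<in> E) \<and> \<rho> u < \<rho> v}"

definition elim_ranking :: "'a set \<Rightarrow> ('a \<times> 'a) set \<Rightarrow> nat \<Rightarrow> ('a \<Rightarrow> 'b::linorder) \<Rightarrow> bool" where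
  "elim_ranking V E k \<rho> \<longleftrightarrow> inj_on \<rho> V \<and> (\<forall>v\<in>V. card (earlier_nbrs V E \<rho> v) \<le> k)"

lemma ex_order_preserving_bij:
  fixes \<rho> :: "'a \<Rightarrow> 'b::linorder"
  assumes "finite V" "inj_on \<rho> V"
  obtains \<phi> where "bij_betw \<phi> V {1..card V}" "\<And>u v. u \<in> V \<Longrightarrow> v \<in> V \<Longrightarrow> \<phi> u < \<phi> v \<longleftrightarrow> \<rho> u < \<rho> v"
proof -
  define \<phi> where "\<phi> v = Suc (card {u \<in> V. \<rho> u < \<rho> v})" for v
  have mono: "\<phi> u < \<phi> v" if "u \<in> V" "\<rho> u < \<rho> v" for u v
  proof -
    have "{w \<in> V. \<rho> w < \<rho> u} \<subset> {w \<in> V. \<rho> w < \<rho> v}"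
      using that by (auto intro: less_trans)
    then show ?thesis unfolding \<phi>_def using assms(1) by (simp add: psubset_card_mono)
  qed
  have iff: "\<phi> u < \<phi> v \<longleftrightarrow> \<rho> u < \<rho> v" if "u \<in> V" "v \<in> V" for u v
    using mono[of u v] mono[of v u] inj_on_eq_iff[OF assms(2) that] that
    by (cases "\<rho> u" "\<rho> v" rule: linorder_cases) auto
  have "inj_on \<phi> V"
  proof (rule inj_onI)
    fix u v assume uv: "u \<in> V" "v \<in> V" "\<phi> u = \<phi> v"
    then have "\<rho> u = \<rho> v" using iff[of u v] iff[of v u] by auto
    with uv show "u = v" using inj_on_eq_iff[OF assms(2)] by blast
  qed
  moreover have "\<phi> ` V \<subseteq> {1..card V}"
    unfolding \<phi>_def using assms(1) by (auto intro!: psubset_card_mono simp: Suc_le_eq)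
  ultimately have "bij_betw \<phi> V {1..card V}"
    unfolding bij_betw_def by (simp add: card_image card_subset_eq)
  with iff show thesis using that by blast
qed

lemma ex_elim_ordering_if_elim_ranking:
  assumes "finite V" "elim_ranking V E k \<rho>"
  obtains \<phi> where "elim_ordering V E k \<phi>" "\<And>u v. u \<in> V \<Longrightarrow> v \<in> V \<Longrightarrow> \<phi> u < \<phi> v \<longleftrightarrow> \<rho> u < \<rho> v"
proof -
  obtain \<phi> where \<phi>: "bij_betw \<phi> V {1..card V}" "\<And>u v. u \<in> V \<Longrightarrow> v \<in> V \<Longrightarrow> \<phi> u < \<phi> v \<longleftrightarrow> \<rho> u < \<rho> v"
    using ex_order_preserving_bij assms unfolding elim_ranking_def by blast
  then have "earlier_nbrs V E \<phi> v = earlier_nbrs V E \<rho> v" if "v \<in> V" for v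
    using that unfolding earlier_nbrs_def by auto
  then have "elim_ordering V E k \<phi>"
    using \<phi>(1) assms(2) unfolding elim_ordering_def elim_ranking_def earlier_nbrs_def by simp
  with \<phi>(2) show thesis using that by blast
qed

lemma degeneracy_le_if_elim_ranking:
  assumes "finite V" "elim_ranking V E k \<rho>"
  shows "degeneracy V E \<le> k"
  using ex_elim_ordering_if_elim_ranking[OF assms] unfolding degeneracy_def by (metis Least_le)

lemma elim_ranking_image:
  assumes "inj_on h V" "E \<subseteq> V \<times> V" "elim_ranking V E k \<rho>"
  shows "elim_ranking (h ` V) (map_prod h h ` E) k (\<rho> \<circ> inv_into V h)"
proof -
  let ?\<rho>' = "\<rho> \<circ> inv_into V h" and ?E' = "map_prod h h ` E"
  have "earlier_nbrs (h ` V) ?E' ?\<rho>' (h v) = h ` earlier_nbrs V E \<rho> v" if "v \<in> V" for v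
  proof -
    have filter_image: "{x \<in> h ` V. P x} = h ` {u \<in> V. P (h u)}" for P by auto
    have "earlier_nbrs (h ` V) ?E' ?\<rho>' (h v) =
        h ` {u \<in> V. ((h u, h v) \<in> ?E' \<or> (h v, h u) \<in> ?E') \<and> ?\<rho>' (h u) < ?\<rho>' (h v)}"
      unfolding earlier_nbrs_def by (rule filter_image)
    also have "\<dots> = h ` earlier_nbrs V E \<rho> v"
      unfolding earlier_nbrs_def using that assms(1)
      by (intro arg_cong[where f = "image h"] Collect_cong)
        (simp add: map_prod_image_mem_iff[OF assms(1,2)] inv_into_f_f cong: conj_cong)
    finally show ?thesis .
  qed
  moreover have "inj_on (\<rho> \<circ> inv_into V h) (h ` V)"
    using assms(1,3) unfolding elim_ranking_def
    by (simp add: comp_inj_on inj_on_inv_into inv_into_image_cancel)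
  moreover have "card (h ` earlier_nbrs V E \<rho> v) = card (earlier_nbrs V E \<rho> v)" for v
    using assms(1) unfolding earlier_nbrs_def by (intro card_image) (auto intro: inj_on_subset)
  ultimately show ?thesis using assms(3) unfolding elim_ranking_def by auto
qed

lemma degeneracy_image_le:
  assumes "finite V" "inj_on h V" "E \<subseteq> V \<times> V" "elim_ranking V E k \<rho>"
  shows "degeneracy (h ` V) (map_prod h h ` E) \<le> k"
  using degeneracy_le_if_elim_ranking[OF _ elim_ranking_image[OF assms(2-4)]] assms(1) by simp

lemma ex_S_last_elim_ordering:
  assumes "finite V" "S \<subseteq> V"
  shows "\<exists>\<phi>. elim_ordering V E (card V) \<phi> \<and> S_last V S \<phi>"
proof -
  obtain g :: "'a \<Rightarrow> nat" where g: "inj_on g V"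
    using finite_imp_inj_to_nat_seg[OF assms(1)] by blast
  define \<rho> where "\<rho> v = (v \<notin> S, g v)" for v
  \<comment> \<open>lexicographic order: the vertices of S, ranked False, come first\<close>
  have "elim_ranking V E (card V) \<rho>"
    using g assms unfolding elim_ranking_def earlier_nbrs_def \<rho>_def
    by (auto simp: inj_on_def intro: card_mono)
  then obtain \<phi> where "elim_ordering V E (card V) \<phi>"
    and "\<And>u v. u \<in> V \<Longrightarrow> v \<in> V \<Longrightarrow> \<phi> u < \<phi> v \<longleftrightarrow> \<rho> u < \<rho> v"
    using ex_elim_ordering_if_elim_ranking assms(1) by blast
  moreover from this(2) have "S_last V S \<phi>"
    using assms(2) unfolding S_last_def \<rho>_def by auto
  ultimately show ?thesis by blast
qed

lemma ex_nat_isomorphic_copy: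
  assumes "graph_ok dir V E" "elim_ranking V E k \<rho>"
  obtains V' :: "nat set" and E' where "graph_ok dir V' E'" "card V' = card V"
    "fvn dir V' E' = fvn dir V E" "degeneracy V' E' \<le> k"
proof -
  have "finite V" "E \<subseteq> V \<times> V" using assms(1) unfolding graph_ok_def by auto
  then obtain h :: "'a \<Rightarrow> nat" where h: "inj_on h V"
    using finite_imp_inj_to_nat_seg by blast
  show thesis
  proof (rule that)
    show "graph_ok dir (h ` V) (map_prod h h ` E)" by (rule graph_ok_image[OF assms(1) h])
    show "card (h ` V) = card V" by (rule card_image[OF h])
    show "fvn dir (h ` V) (map_prod h h ` E) = fvn dir V E"
      by (rule fvn_image[OF \<open>finite V\<close> h \<open>E \<subseteq> V \<times> V\<close>])
    show "degeneracy (h ` V) (map_prod h h ` E) \<le> k"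
      by (rule degeneracy_image_le[OF \<open>finite V\<close> h \<open>E \<subseteq> V \<times> V\<close> assms(2)])
  qed
qed

lemma deg_RL_attained:
  assumes "finite V"
  obtains \<phi> where "elim_ordering (blowup_V V r (card R)) (blowup_E E r (card R)) (deg_RL V E R r) \<phi>"
    and "S_last (blowup_V V r (card R)) (Inr ` {..<card R}) \<phi>"
proof -
  have "finite (blowup_V V r (card R))" "Inr ` {..<card R} \<subseteq> blowup_V V r (card R)"
    unfolding blowup_V_def using assms by auto
  then have "\<exists>k \<phi>. elim_ordering (blowup_V V r (card R)) (blowup_E E r (card R)) k \<phi> \<and>
      S_last (blowup_V V r (card R)) (Inr ` {..<card R}) \<phi>"
    using ex_S_last_elim_ordering by blast
  then have "\<exists>\<phi>. elim_ordering (blowup_V V r (card R)) (blowup_E E r (card R)) (deg_RL V E R r) \<phi> \<and>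
      S_last (blowup_V V r (card R)) (Inr ` {..<card R}) \<phi>"
    unfolding deg_RL_def by (rule LeastI_ex)
  then show thesis using that by blast
qed

section \<open>The tower\<close>

locale tower =
  fixes dir :: bool and V :: "'a set" and E :: "('a \<times> 'a) set" and R :: "'a set" and r :: 'a
  assumes graph: "graph_ok dir V E" and R_subset: "R \<subseteq> V" and r_in: "r \<in> V" and r_notin: "r \<notin> R"
begin

text \<open>(k, v) is the copy of v in layer k of D_i; only layer 0 contains a copy of r.\<close>

definition tower_V :: "nat \<Rightarrow> (nat \<times> 'a) set" where
  "tower_V i = {(k, v). k \<le> i \<and> v \<in> V \<and> (k = 0 \<or> v \<noteq> r)}"

definition tower_E :: "nat \<Rightarrow> ((nat \<times> 'a) \<times> (nat \<times> 'a)) set" where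
  "tower_E i = {((k, u), (l, v)). (k, u) \<in> tower_V i \<and> (l, v) \<in> tower_V i \<and>
     (k = l \<and> (u, v) \<in> E \<or> l = Suc k \<and> u \<in> R \<and> (r, v) \<in> E \<or> k = Suc l \<and> v \<in> R \<and> (u, r) \<in> E)}"

lemma finite_V: "finite V" and irrefl: "(v, v) \<notin> E"
  using graph unfolding graph_ok_def by auto

lemma tower_V_0: "tower_V 0 = Pair 0 ` V"
  unfolding tower_V_def by auto

lemma tower_V_Suc: "tower_V (Suc i) = tower_V i \<union> Pair (Suc i) ` (V - {r})"
  unfolding tower_V_def by auto

lemma finite_tower_V: "finite (tower_V i)"
proof -
  have "tower_V i \<subseteq> {..i} \<times> V" unfolding tower_V_def by auto
  then show ?thesis using finite_V finite_subset by blast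
qed

lemma card_tower_V: "card (tower_V i) = card V + i * (card V - 1)"
proof (induction i)
  case 0
  then show ?case by (simp add: tower_V_0 card_image inj_on_def)
next
  case (Suc i)
  have "tower_V i \<inter> Pair (Suc i) ` (V - {r}) = {}" unfolding tower_V_def by auto
  then have "card (tower_V (Suc i)) = card (tower_V i) + card (V - {r})"
    unfolding tower_V_Suc using finite_tower_V finite_V
    by (simp add: card_Un_disjoint card_image inj_on_def)
  then show ?case using Suc.IH r_in finite_V by simp
qed

lemma tower_E_subset: "tower_E i \<subseteq> tower_V i \<times> tower_V i"
  unfolding tower_E_def by auto

lemma graph_ok_tower: "graph_ok dir (tower_V i) (tower_E i)"
proof -
  have orient: "(v, u) \<notin> E" if "dir" "(u, v) \<in> E" for u v
    using graph that unfolding graph_ok_def by auto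
  have sym: "(v, u) \<in> E" if "\<not> dir" "(u, v) \<in> E" for u v
    using graph that unfolding graph_ok_def by auto
  have "(p, p) \<notin> tower_E i" for p
    using irrefl by (cases p) (auto simp: tower_E_def)
  moreover have "(q, p) \<notin> tower_E i" if "dir" "(p, q) \<in> tower_E i" for p q
    using that orient[OF \<open>dir\<close>] by (cases p; cases q) (auto simp: tower_E_def)
  moreover have "(q, p) \<in> tower_E i" if "\<not> dir" "(p, q) \<in> tower_E i" for p q
    using that sym[OF \<open>\<not> dir\<close>] by (cases p; cases q) (auto simp: tower_E_def)
  ultimately show ?thesis
    using finite_tower_V tower_E_subset unfolding graph_ok_def by (cases dir) simp_all
qed

lemma tower_V_mono: "tower_V i \<subseteq> tower_V (Suc i)"
  unfolding tower_V_def by auto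

lemma tower_E_mono: "tower_E i \<subseteq> tower_E (Suc i)"
  using tower_V_mono unfolding tower_E_def by blast

lemma is_fvs_tower_restrict:
  assumes "is_fvs dir (tower_V (Suc i)) (tower_E (Suc i)) F"
  shows "is_fvs dir (tower_V i) (tower_E i) (F \<inter> tower_V i)"
proof -
  have "is_fvs dir (tower_V i) (tower_E i) {p \<in> tower_V i. id p \<in> F}"
    using assms by (rule is_fvs_preimage) (use tower_V_mono tower_E_mono in auto)
  moreover have "{p \<in> tower_V i. id p \<in> F} = F \<inter> tower_V i" by auto
  ultimately show ?thesis by simp
qed

lemma is_fvs_tower_base:
  assumes "is_fvs dir (tower_V 0) (tower_E 0) F"
  shows "is_fvs dir V E (Pair 0 -` F)"
proof -
  have "is_fvs dir V E {v \<in> V. (0, v) \<in> F}"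
    using assms by (rule is_fvs_preimage) (auto simp: tower_V_0 tower_E_def inj_on_def)
  moreover have "{v \<in> V. (0, v) \<in> F} = Pair 0 -` F"
    using assms unfolding is_fvs_def tower_V_0 by auto
  ultimately show ?thesis by simp
qed

lemma is_fvs_tower_top_via_port:
  assumes "is_fvs dir (tower_V (Suc i)) (tower_E (Suc i)) F" "x \<in> R" "(i, x) \<notin> F"
  shows "is_fvs dir V E (Pair (Suc i) -` F)"
proof -
  define g where "g v = (if v = r then (i, x) else (Suc i, v))" for v
  have "is_fvs dir V E {v \<in> V. g v \<in> F}"
    using assms(1)
  proof (rule is_fvs_preimage)
    show "inj_on g V" unfolding g_def inj_on_def by auto
    show "g ` V \<subseteq> tower_V (Suc i)"
      unfolding g_def tower_V_def using assms(2) R_subset r_notin by auto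
    show "(g u, g v) \<in> tower_E (Suc i)" if "u \<in> V" "v \<in> V" "(u, v) \<in> E" for u v
      using that assms(2) R_subset r_notin irrefl unfolding g_def tower_E_def tower_V_def by auto
  qed
  moreover have "{v \<in> V. g v \<in> F} = Pair (Suc i) -` F"
    using assms unfolding is_fvs_def tower_V_def g_def by auto
  ultimately show ?thesis by simp
qed

lemma is_fvs_tower_top:
  assumes "is_fvs dir (tower_V (Suc i)) (tower_E (Suc i)) F"
  shows "is_fvs dir V E (insert r (Pair (Suc i) -` F))"
proof -
  have "is_fvs dir (V - {r}) E {v \<in> V - {r}. (Suc i, v) \<in> F}"
    using assms
    by (rule is_fvs_preimage) (auto simp: tower_V_Suc tower_E_def tower_V_def inj_on_def)
  moreover have "Pair (Suc i) -` F \<subseteq> V - {r}"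
    using assms unfolding is_fvs_def tower_V_def by auto
  moreover from this
  have "V - insert r (Pair (Suc i) -` F) = V - {r} - {v \<in> V - {r}. (Suc i, v) \<in> F}" by auto
  ultimately show ?thesis using r_in unfolding is_fvs_def by auto
qed

lemma card_tower_split:
  assumes "F \<subseteq> tower_V (Suc i)"
  shows "card F = card (F \<inter> tower_V i) + card (Pair (Suc i) -` F)"
proof -
  have "F = (F \<inter> tower_V i) \<union> Pair (Suc i) ` (Pair (Suc i) -` F)"
    using assms unfolding tower_V_Suc by auto
  moreover have "(F \<inter> tower_V i) \<inter> Pair (Suc i) ` (Pair (Suc i) -` F) = {}"
    unfolding tower_V_def by auto
  moreover have "finite F" using assms finite_tower_V finite_subset by blast
  ultimately have "card F = card (F \<inter> tower_V i) + card (Pair (Suc i) ` (Pair (Suc i) -` F))"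
    by (metis card_Un_disjoint finite_Un)
  moreover have "card (Pair (Suc i) ` (Pair (Suc i) -` F)) = card (Pair (Suc i) -` F)"
    by (rule card_image) (simp add: inj_on_def)
  ultimately show ?thesis by simp
qed

lemma card_fvs_tower_lower:
  assumes bad: "bad_set dir V E R" and "is_fvs dir (tower_V i) (tower_E i) F"
  shows "Suc i * fvn dir V E \<le> card F \<and> (Pair i ` R \<subseteq> F \<longrightarrow> Suc i * fvn dir V E < card F)"
  using assms(2)
proof (induction i arbitrary: F)
  case 0
  let ?G = "Pair 0 -` F"
  have G: "is_fvs dir V E ?G" using 0 by (rule is_fvs_tower_base)
  have "F = Pair 0 ` ?G" using 0 unfolding is_fvs_def tower_V_0 by auto
  moreover have "card (Pair 0 ` ?G) = card ?G" by (rule card_image) (simp add: inj_on_def)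
  ultimately have "card F = card ?G" by metis
  then show ?case using fvn_le_card[OF G] fvn_less_card_if_bad_set[OF bad G] by auto
next
  case (Suc i)
  let ?f = "fvn dir V E" and ?F = "F \<inter> tower_V i" and ?G = "Pair (Suc i) -` F"
  have split: "card F = card ?F + card ?G"
    using Suc.prems card_tower_split unfolding is_fvs_def by blast
  have IH: "Suc i * ?f \<le> card ?F" "Pair i ` R \<subseteq> ?F \<Longrightarrow> Suc i * ?f < card ?F"
    using Suc.IH[OF is_fvs_tower_restrict[OF Suc.prems]] by auto
  have top_R: "R \<subseteq> ?G" if "Pair (Suc i) ` R \<subseteq> F" using that by auto
  show ?case
  proof (cases "Pair i ` R \<subseteq> F")
    case False
    then obtain x where "x \<in> R" "(i, x) \<notin> F" by auto
    then have G: "is_fvs dir V E ?G" by (rule is_fvs_tower_top_via_port[OF Suc.prems])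
    show ?thesis
      using IH(1) split fvn_le_card[OF G] fvn_less_card_if_bad_set[OF bad G] top_R by auto
  next
    case True
    then have "Pair i ` R \<subseteq> ?F" using R_subset r_notin unfolding tower_V_def by auto
    then have lower: "Suc i * ?f < card ?F" by (rule IH(2))
    have G: "is_fvs dir V E (insert r ?G)" by (rule is_fvs_tower_top[OF Suc.prems])
    have "finite ?G" using G finite_V unfolding is_fvs_def by (auto intro: finite_subset)
    then have "card (insert r ?G) \<le> Suc (card ?G)" by (simp add: card_insert_if)
    moreover have "R \<subseteq> insert r ?G" if "Pair (Suc i) ` R \<subseteq> F" using top_R[OF that] by blast
    ultimately show ?thesis
      using lower split fvn_le_card[OF G] fvn_less_card_if_bad_set[OF bad G] by force
  qed
qed

lemma fvn_tower_lower:
  assumes "bad_set dir V E R"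
  shows "Suc i * fvn dir V E \<le> fvn dir (tower_V i) (tower_E i)"
  using card_fvs_tower_lower[OF assms] ex_min_fvs[OF finite_tower_V] unfolding min_fvs_def by metis

text \<open>F in every layer; where F uses r, which layers above 0 lack, the port x of the layer below
  is deleted instead (the other R-vertices are already in F).\<close>

definition lifted_fvs :: "'a \<Rightarrow> 'a set \<Rightarrow> nat \<Rightarrow> (nat \<times> 'a) set" where
  "lifted_fvs x F i = {(k, v) \<in> tower_V i. v \<in> F \<or> (k < i \<and> v = x \<and> r \<in> F)}"

lemma card_lifted_fvs:
  assumes "finite F"
  shows "card (lifted_fvs x F i) \<le> Suc i * card F"
proof -
  define \<mu> where "\<mu> p = (if snd p \<in> F then p else (Suc (fst p), r))" for p :: "nat \<times> 'a"
  have "inj_on \<mu> (lifted_fvs x F i)"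
    unfolding \<mu>_def lifted_fvs_def tower_V_def inj_on_def by auto
  moreover have "\<mu> ` lifted_fvs x F i \<subseteq> {..i} \<times> F"
    unfolding \<mu>_def lifted_fvs_def tower_V_def by auto
  ultimately have "card (lifted_fvs x F i) \<le> card ({..i} \<times> F)"
    using assms by (intro card_inj_on_le) auto
  then show ?thesis by (simp add: card_cartesian_product)
qed

lemma lifted_fvs_cycle_top:
  assumes cyc: "is_cycle dir (tower_V i - lifted_fvs x F i) (tower_E i) vs"
    and x: "x \<in> R" "R - {x} \<subseteq> F"
    and top: "q \<in> set vs" "\<And>p. p \<in> set vs \<Longrightarrow> fst p \<le> fst q"
  shows "set vs \<subseteq> insert (fst q - 1, x) {p. fst p = fst q}"
proof -
  have S: "set vs \<subseteq> tower_V i - lifted_fvs x F i" using cyc unfolding is_cycle_def by blast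
  have port: "p = (fst q - 1, x)"
    if "p \<in> set vs" "p' \<in> set vs" "(p, p') \<in> tower_E i \<or> (p', p) \<in> tower_E i"
      "fst p \<noteq> fst q" "fst p' = fst q" for p p'
    using that S top(2)[OF that(1)] x unfolding tower_E_def lifted_fvs_def by fastforce
  show ?thesis
    using cyc top(1)
    by (rule is_cycle_subset_single_port) (use port in auto)
qed

lemma lifted_fvs_cycle_fold:
  assumes cyc: "is_cycle dir (tower_V i - lifted_fvs x F i) (tower_E i) vs"
    and sub: "set vs \<subseteq> insert (m - 1, x) {p. fst p = m}" and "m \<le> i"
  shows "is_cycle dir (V - F) E (map (\<lambda>p. if fst p = m then snd p else r) vs)"
proof (rule is_cycle_map[OF cyc])
  let ?\<psi> = "\<lambda>p. if fst p = m then snd p else r"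
  have S: "set vs \<subseteq> tower_V i - lifted_fvs x F i" using cyc unfolding is_cycle_def by blast
  have on_top: "snd p \<in> V - F" "m \<noteq> 0 \<Longrightarrow> snd p \<noteq> r" if "p \<in> set vs" "fst p = m" for p
    using that S unfolding tower_V_def lifted_fvs_def by auto
  have below: "p = (m - 1, x)" "m \<noteq> 0" if "p \<in> set vs" "fst p \<noteq> m" for p
    using that sub by auto
  have port_free: "r \<in> V - F" if "p \<in> set vs" "fst p \<noteq> m" for p
  proof -
    have "p = (m - 1, x)" "m - 1 < i" using below[OF that] \<open>m \<le> i\<close> by auto
    then show ?thesis using that(1) S r_in unfolding lifted_fvs_def by auto
  qed
  show "inj_on ?\<psi> (set vs)"
  proof (rule inj_onI)
    fix p p' assume p: "p \<in> set vs" "p' \<in> set vs" "?\<psi> p = ?\<psi> p'"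
    then show "p = p'"
      using on_top[of p] on_top[of p'] below[of p] below[of p']
      by (cases "fst p = m"; cases "fst p' = m") (auto simp: prod_eq_iff)
  qed
  show "?\<psi> ` set vs \<subseteq> V - F"
    using on_top port_free by auto
  show "(?\<psi> p, ?\<psi> p') \<in> E" if "p \<in> set vs" "p' \<in> set vs" "(p, p') \<in> tower_E i" for p p'
    using that below[of p] below[of p'] irrefl
    by (cases "fst p = m"; cases "fst p' = m") (auto simp: tower_E_def)
qed

lemma lifted_fvs_is_fvs:
  assumes F: "is_fvs dir V E F" and x: "x \<in> R" "R - {x} \<subseteq> F"
  shows "is_fvs dir (tower_V i) (tower_E i) (lifted_fvs x F i)"
  unfolding is_fvs_def
proof (intro conjI notI)
  show "lifted_fvs x F i \<subseteq> tower_V i" unfolding lifted_fvs_def by auto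
  assume "has_cycle dir (tower_V i - lifted_fvs x F i) (tower_E i)"
  then obtain vs where cyc: "is_cycle dir (tower_V i - lifted_fvs x F i) (tower_E i) vs"
    using has_cycle_iff by blast
  then have "set vs \<noteq> {}" unfolding is_cycle_def by (auto split: if_splits)
  then obtain q where "q \<in> set vs" "fst q = Max (fst ` set vs)"
    using Max_in[of "fst ` set vs"] by (metis finite_imageI finite_set image_iff image_is_empty)
  then have q: "q \<in> set vs" "\<And>p. p \<in> set vs \<Longrightarrow> fst p \<le> fst q" by simp_all
  have "fst q \<le> i" using cyc q(1) unfolding is_cycle_def tower_V_def by auto
  with lifted_fvs_cycle_fold[OF cyc lifted_fvs_cycle_top[OF cyc x q]]
  have "has_cycle dir (V - F) E" using has_cycle_iff by blast
  then show False using F unfolding is_fvs_def by blast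
qed

lemma fvn_tower_upper:
  assumes "minimal_bad_set dir V E R"
  shows "fvn dir (tower_V i) (tower_E i) \<le> Suc i * fvn dir V E"
proof -
  have "R \<noteq> {}"
    using bad_set_nonempty[OF finite_V] assms unfolding minimal_bad_set_def by blast
  then obtain x where x: "x \<in> R" by blast
  obtain F where F: "min_fvs dir V E F" "R - {x} \<subseteq> F"
    using minimal_bad_set_witness[OF assms x] by blast
  then have fvs: "is_fvs dir V E F" and card: "card F = fvn dir V E"
    unfolding min_fvs_def by blast+
  have "finite F" using fvs finite_V unfolding is_fvs_def by (blast intro: finite_subset)
  have "fvn dir (tower_V i) (tower_E i) \<le> card (lifted_fvs x F i)"
    by (rule fvn_le_card[OF lifted_fvs_is_fvs[OF fvs x F(2)]])
  also have "\<dots> \<le> Suc i * card F" using \<open>finite F\<close> by (rule card_lifted_fvs)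
  finally show ?thesis using card by simp
qed

definition blowup_embed :: "'a \<Rightarrow> 'a + nat" where
  "blowup_embed v = (if v = r then Inr 0 else Inl v)"

lemma tower_adjacent_cases:
  assumes "((k, y), (l, v)) \<in> tower_E i \<or> ((l, v), (k, y)) \<in> tower_E i"
  shows "k = l \<and> ((y, v) \<in> E \<or> (v, y) \<in> E) \<or> l = Suc k \<and> y \<in> R \<and> ((r, v) \<in> E \<or> (v, r) \<in> E) \<or>
    k = Suc l"
  using assms unfolding tower_E_def by auto

lemma earlier_nbrs_tower_subset:
  assumes "R \<noteq> {}" "R \<subseteq> ix ` {..<card R}"
    and last: "S_last (blowup_V V r (card R)) (Inr ` {..<card R}) \<phi>"
    and w: "(l, v) \<in> tower_V i"
  defines "\<rho> \<equiv> \<lambda>(k, y). (k, \<phi> (blowup_embed y))"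
  shows "earlier_nbrs (tower_V i) (tower_E i) \<rho> (l, v) \<subseteq>
    case_sum (\<lambda>y. (l, y)) (\<lambda>j. if l = 0 then (0, r) else (l - 1, ix j)) `
      earlier_nbrs (blowup_V V r (card R)) (blowup_E E r (card R)) \<phi> (blowup_embed v)"
    (is "_ \<subseteq> ?\<nu> ` ?B")
proof
  fix u assume u: "u \<in> earlier_nbrs (tower_V i) (tower_E i) \<rho> (l, v)"
  obtain k y where ky: "u = (k, y)" by fastforce
  have uV: "(k, y) \<in> tower_V i"
    and adj: "((k, y), (l, v)) \<in> tower_E i \<or> ((l, v), (k, y)) \<in> tower_E i"
    and less: "k < l \<or> k = l \<and> \<phi> (blowup_embed y) < \<phi> (blowup_embed v)"
    using u unfolding ky earlier_nbrs_def \<rho>_def by (auto simp: less_prod_def)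
  have R0: "0 < card R" using assms(1) finite_V R_subset by (simp add: card_gt_0_iff finite_subset)
  consider "k = l" "(y, v) \<in> E \<or> (v, y) \<in> E" | "l = Suc k" "y \<in> R" "(r, v) \<in> E \<or> (v, r) \<in> E"
    using tower_adjacent_cases[OF adj] less by auto
  then show "u \<in> ?\<nu> ` ?B"
  proof cases
    case 1
    have "blowup_embed y \<in> ?B"
      using 1 less uV w irrefl R0
      unfolding earlier_nbrs_def blowup_V_def blowup_E_def blowup_embed_def tower_V_def by auto
    moreover have "?\<nu> (blowup_embed y) = u"
      using 1 uV unfolding ky blowup_embed_def tower_V_def by auto
    ultimately show ?thesis by force
  next
    case 2
    then obtain j where j: "j < card R" "ix j = y" using assms(2) by auto
    have "v \<noteq> r" using w 2(1) unfolding tower_V_def by auto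
    then have "\<phi> (Inr j) < \<phi> (Inl v)"
      using last j(1) w unfolding S_last_def blowup_V_def tower_V_def by auto
    then have "Inr j \<in> ?B"
      using 2 j \<open>v \<noteq> r\<close> w
      unfolding earlier_nbrs_def blowup_V_def blowup_E_def blowup_embed_def tower_V_def by auto
    moreover have "?\<nu> (Inr j) = u" using 2 j unfolding ky by auto
    ultimately show ?thesis by force
  qed
qed

lemma tower_elim_ranking:
  assumes "R \<noteq> {}"
    and ord: "elim_ordering (blowup_V V r (card R)) (blowup_E E r (card R)) k \<phi>"
    and last: "S_last (blowup_V V r (card R)) (Inr ` {..<card R}) \<phi>"
  shows "elim_ranking (tower_V i) (tower_E i) k (\<lambda>(l, v). (l, \<phi> (blowup_embed v)))"
proof -
  let ?BV = "blowup_V V r (card R)" and ?BE = "blowup_E E r (card R)"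
  let ?\<rho> = "\<lambda>(l, v). (l, \<phi> (blowup_embed v))"
  have "finite R" using finite_V R_subset finite_subset by blast
  then obtain ix where "bij_betw ix {0..<card R} R" using ex_bij_betw_nat_finite by blast
  then have cover: "R \<subseteq> ix ` {..<card R}" by (simp add: bij_betw_def atLeast0LessThan)
  have finite_BV: "finite ?BV" unfolding blowup_V_def using finite_V by simp
  have "0 < card R" using assms(1) \<open>finite R\<close> by (simp add: card_gt_0_iff)
  then have embed_in: "blowup_embed v \<in> ?BV" if "v \<in> V" for v
    using that unfolding blowup_embed_def blowup_V_def by auto
  have "inj_on blowup_embed V" unfolding inj_on_def blowup_embed_def by auto
  moreover have "inj_on \<phi> (blowup_embed ` V)"
    using ord embed_in unfolding elim_ordering_def bij_betw_def by (blast intro: inj_on_subset)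
  ultimately have "inj_on (\<phi> \<circ> blowup_embed) V" by (rule comp_inj_on)
  then have "inj_on ?\<rho> (tower_V i)" unfolding tower_V_def inj_on_def by auto
  moreover have "card (earlier_nbrs (tower_V i) (tower_E i) ?\<rho> w) \<le> k" if w: "w \<in> tower_V i" for w
  proof -
    obtain l v where lv: "w = (l, v)" by fastforce
    let ?\<nu> = "case_sum (\<lambda>y. (l, y)) (\<lambda>j. if l = 0 then (0, r) else (l - 1, ix j))"
    let ?B = "earlier_nbrs ?BV ?BE \<phi> (blowup_embed v)"
    have "finite ?B" using finite_BV unfolding earlier_nbrs_def by simp
    have "card (earlier_nbrs (tower_V i) (tower_E i) ?\<rho> w) \<le> card (?\<nu> ` ?B)"
      using earlier_nbrs_tower_subset[OF assms(1) cover last w[unfolded lv]] \<open>finite ?B\<close>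
      unfolding lv by (intro card_mono) auto
    also have "\<dots> \<le> card ?B" using \<open>finite ?B\<close> by (rule card_image_le)
    also have "\<dots> \<le> k"
      using ord embed_in w unfolding lv elim_ordering_def earlier_nbrs_def tower_V_def by auto
    finally show ?thesis .
  qed
  ultimately show ?thesis unfolding elim_ranking_def by blast
qed

end

theorem mainTheorem11:
  fixes dir :: bool and V :: "'a set" and E :: "('a \<times> 'a) set" and R :: "'a set" and r' :: 'a
  assumes "graph_ok dir V E"
    and "bad_set dir V E R"
    and "r' \<in> V - R"
  shows "\<exists>(VV :: nat \<Rightarrow> nat set) (EE :: nat \<Rightarrow> (nat \<times> nat) set). \<forall>i.
           graph_ok dir (VV i) (EE i) \<and>
           card (VV i) = card V + i * (card V - 1) \<and>
           fvn dir (VV i) (EE i) \<ge> fvn dir V E + i * fvn dir V E \<and>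
           (minimal_bad_set dir V E R \<longrightarrow> fvn dir (VV i) (EE i) = fvn dir V E + i * fvn dir V E) \<and>
           degeneracy (VV i) (EE i) \<le> deg_RL V E R r'"
proof -
  have "finite V" using assms(1) unfolding graph_ok_def by blast
  have "R \<subseteq> V" "R \<noteq> {}" using assms(2) bad_set_nonempty[OF \<open>finite V\<close>] unfolding bad_set_def by auto
  interpret tower dir V E R r' by unfold_locales (use assms \<open>R \<subseteq> V\<close> in auto)
  obtain \<phi>
    where \<phi>: "elim_ordering (blowup_V V r' (card R)) (blowup_E E r' (card R)) (deg_RL V E R r') \<phi>"
      "S_last (blowup_V V r' (card R)) (Inr ` {..<card R}) \<phi>"
    using deg_RL_attained[OF \<open>finite V\<close>] by blast
  have "\<exists>(W :: nat set) E'. graph_ok dir W E' \<and> card W = card V + i * (card V - 1) \<and>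
      fvn dir W E' \<ge> fvn dir V E + i * fvn dir V E \<and>
      (minimal_bad_set dir V E R \<longrightarrow> fvn dir W E' = fvn dir V E + i * fvn dir V E) \<and>
      degeneracy W E' \<le> deg_RL V E R r'" for i
  proof -
    obtain W :: "nat set" and E' where "graph_ok dir W E'" "card W = card (tower_V i)"
      "fvn dir W E' = fvn dir (tower_V i) (tower_E i)" "degeneracy W E' \<le> deg_RL V E R r'"
      using ex_nat_isomorphic_copy[OF graph_ok_tower tower_elim_ranking[OF \<open>R \<noteq> {}\<close> \<phi>]] .
    then show ?thesis
      using card_tower_V fvn_tower_lower[OF assms(2), of i] fvn_tower_upper[of i]
      by (intro exI[of _ W] exI[of _ E']) (auto intro: antisym)
  qed
  then show ?thesis by metis
qed

end
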